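(* Let $n$ be a positive integer, let $u$ be the unique positive real root of $x^{2n+1} + x^{2n} + \cdots + x^{n} - x^{n-1} - \cdots - x - 1 = 0$, and let $L(x)=\mathrm{Li}_2(x)+\tfrac12\log x\,\log(1-x)$ for $0<x<1$ denote Rogers' dilogarithm. Then $$2L\!\left(u^{n+2}\right) - 2L\!\left(u^{n}\right) - L\!\left(u^2\right) = -\zeta(2).$$
   Context: $\mathrm{Li}_2(x)=\sum_{k\ge1}x^k/k^2$, $\log$ is the real natural logarithm, $\zeta(2)=\pi^2/6$. *)

theory Defs
  imports Complex_Main
begin

definition Li2 :: "real \<Rightarrow> real" where
  "Li2 x = (\<Sum>k. x ^ (k + 1) / (real (k + 1))^2)"

definition rogersL :: "real \<Rightarrow> real" where
  "rogersL x = Li2 x + (1/2) * ln x * ln (1 - x)"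

end

theory Submission
  imports Defs "HOL-Analysis.Analysis" "HOL-Real_Asymp.Real_Asymp"
begin

text \<open>
  Put \<open>c = 1 - u^(n+2)\<close>. Summing the geometric series, the defining equation of \<open>u\<close>
  becomes \<open>u^n (1 + c) = 1\<close>, so the three arguments are \<open>1 - c\<close>, \<open>1 / (1 + c)\<close> and
  \<open>u^2 = (1 - c) (1 + c) = 1 - c^2\<close>, with \<open>0 < c < 1\<close>. The combination
  \<open>2 L(1 - c) - 2 L(1 / (1 + c)) - L(1 - c^2)\<close> is constant on \<open>(0, 1)\<close>: by
  \<open>L'(x) = -(log (1 - x) / x + log x / (1 - x)) / 2\<close>, the \<open>log (1 - c)\<close> and \<open>log (1 + c)\<close>
  terms of its derivative cancel and the \<open>log c\<close> terms have coefficient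
  \<open>1/(1 - c) - 1/(1 + c) - 2c/(1 - c^2) = 0\<close>. As \<open>L(x) \<rightarrow> \<zeta>(2)\<close> for \<open>x \<rightarrow> 1\<close> from
  below, letting \<open>c \<rightarrow> 0\<close> from above identifies the constant as \<open>(2 - 2 - 1) \<zeta>(2)\<close>.
\<close>

lemma sums_ln_one_minus:
  fixes x :: real
  assumes "\<bar>x\<bar> < 1"
  shows "(\<lambda>n. x ^ Suc n / real (Suc n)) sums - ln (1 - x)"
proof -
  have "(\<lambda>n. - (x ^ n) / real n) sums ln (1 - x)"
    using ln_series'[of "-x"] assms by simp
  then have "(\<lambda>n. x ^ n / real n) sums - ln (1 - x)"
    using sums_minus by fastforce
  then show ?thesis
    by (subst sums_Suc_iff) simp
qed

lemma Li2_has_real_derivative: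
  assumes "0 < x" "x < 1"
  shows "(Li2 has_real_derivative - ln (1 - x) / x) (at x)"
proof -
  let ?a = "\<lambda>n. 1 / real (Suc n) ^ 2"
  have coeff: "?a n * real (Suc n) * y ^ n = y ^ n / real (Suc n)" for n and y :: real
    by (simp add: power2_eq_square)
  have "summable (\<lambda>n. ?a n * real (Suc n) * y ^ n)" if "\<bar>y\<bar> < 1" for y :: real
    unfolding coeff
  proof (rule summable_comparison_test)
    show "summable (\<lambda>n. \<bar>y\<bar> ^ n)" using that by simp
    show "\<exists>N. \<forall>n\<ge>N. norm (y ^ n / real (Suc n)) \<le> \<bar>y\<bar> ^ n"
      by (auto simp: power_abs divide_le_eq mult_le_cancel_left1)
  qed
  then have "DERIV (\<lambda>x. \<Sum>n. ?a n * x ^ Suc n) x :> (\<Sum>n. ?a n * real (Suc n) * x ^ n)"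
    using assms by (intro DERIV_power_series'[where R = 1]) auto
  moreover have "(\<lambda>x. \<Sum>n. ?a n * x ^ Suc n) = Li2"
    by (auto simp: Li2_def)
  moreover have "(\<lambda>n. ?a n * real (Suc n) * x ^ n) sums (- ln (1 - x) / x)"
    unfolding coeff using sums_divide[OF sums_ln_one_minus, of x x] assms by simp
  ultimately show ?thesis
    by (simp add: sums_iff)
qed

lemma continuous_on_Li2: "continuous_on {-1..1} Li2"
proof -
  have "uniform_limit {-1..1} (\<lambda>n x. \<Sum>k<n. x ^ (k + 1) / real (k + 1) ^ 2) Li2 sequentially"
    unfolding Li2_def[abs_def]
  proof (rule Weierstrass_m_test)
    show "summable (\<lambda>k. 1 / real (k + 1) ^ 2)"
      using summable_Suc_iff inverse_squares_sums by (auto simp: sums_iff inverse_eq_divide)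
    show "norm (x ^ (k + 1) / real (k + 1) ^ 2) \<le> 1 / real (k + 1) ^ 2" if "x \<in> {-1..1}" for k x
      using that by (auto simp: abs_mult power_abs intro!: divide_right_mono mult_le_one power_le_one)
  qed
  then show ?thesis
    by (rule uniform_limit_theorem[rotated]) (auto intro!: always_eventually continuous_intros)
qed

lemma Li2_1: "Li2 1 = pi\<^sup>2 / 6"
  using sums_unique[OF inverse_squares_sums] by (simp add: Li2_def add.commute)

lemma rogersL_has_real_derivative:
  assumes "0 < x" "x < 1"
  shows "(rogersL has_real_derivative - (ln (1 - x) / x + ln x / (1 - x)) / 2) (at x)"
  unfolding rogersL_def[abs_def] using assms
  by (auto intro!: derivative_eq_intros Li2_has_real_derivative simp: field_simps)

lemma tendsto_rogersL_1: "(rogersL \<longlongrightarrow> pi\<^sup>2 / 6) (at_left 1)"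
proof -
  have "(Li2 \<longlongrightarrow> Li2 1) (at 1 within {-1..1})"
    using continuous_on_Li2 by (simp add: continuous_on_def)
  then have "(Li2 \<longlongrightarrow> Li2 1) (at_left 1)"
    by (simp add: at_within_Icc_at_left)
  moreover have "((\<lambda>x. ln x * ln (1 - x)) \<longlongrightarrow> 0) (at_left (1::real))"
    by real_asymp
  ultimately have "((\<lambda>x. Li2 x + 1 / 2 * (ln x * ln (1 - x))) \<longlongrightarrow> Li2 1 + 1 / 2 * 0) (at_left 1)"
    by (intro tendsto_intros)
  then show ?thesis
    by (simp add: rogersL_def[abs_def] Li2_1 mult.assoc)
qed

lemma rogersL_comp_has_real_derivative:
  assumes "(g has_real_derivative g') (at x)" "0 < g x" "g x < 1"
  shows "((\<lambda>x. rogersL (g x)) has_real_derivative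
           - (ln (1 - g x) / g x + ln (g x) / (1 - g x)) / 2 * g') (at x)"
  using DERIV_chain2[OF rogersL_has_real_derivative assms(1)] assms(2,3) .

lemma rogersL_one_minus_has_real_derivative:
  fixes c :: real
  assumes "0 < c" "c < 1"
  shows "((\<lambda>c. rogersL (1 - c)) has_real_derivative (ln (1 - c) / c + ln c / (1 - c)) / 2) (at c)"
proof (rule DERIV_cong)
  show "((\<lambda>c. rogersL (1 - c)) has_real_derivative
      - (ln (1 - (1 - c)) / (1 - c) + ln (1 - c) / (1 - (1 - c))) / 2 * - 1) (at c)"
    using assms by (intro rogersL_comp_has_real_derivative) (auto intro!: derivative_eq_intros)
  show "- (ln (1 - (1 - c)) / (1 - c) + ln (1 - c) / (1 - (1 - c))) / 2 * - 1
      = (ln (1 - c) / c + ln c / (1 - c)) / 2"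
    by (simp add: field_simps)
qed

lemma rogersL_inverse_one_plus_has_real_derivative:
  fixes c :: real
  assumes "0 < c"
  shows "((\<lambda>c. rogersL (1 / (1 + c))) has_real_derivative
           (ln c / (1 + c) - ln (1 + c) / c) / 2) (at c)"
proof (rule DERIV_cong)
  show "((\<lambda>c. rogersL (1 / (1 + c))) has_real_derivative
      - (ln (1 - 1 / (1 + c)) / (1 / (1 + c)) + ln (1 / (1 + c)) / (1 - 1 / (1 + c))) / 2
      * (- 1 / (1 + c)\<^sup>2)) (at c)"
    using assms by (intro rogersL_comp_has_real_derivative)
      (auto intro!: derivative_eq_intros simp: power2_eq_square field_simps)
  have arg: "1 - 1 / (1 + c) = c / (1 + c)"
    using assms by (simp add: field_simps)
  have logs: "ln (c / (1 + c)) = ln c - ln (1 + c)" "ln (1 / (1 + c)) = - ln (1 + c)"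
    using assms by (simp_all add: ln_div)
  show "- (ln (1 - 1 / (1 + c)) / (1 / (1 + c)) + ln (1 / (1 + c)) / (1 - 1 / (1 + c))) / 2
      * (- 1 / (1 + c)\<^sup>2) = (ln c / (1 + c) - ln (1 + c) / c) / 2"
    unfolding arg logs using assms by (simp add: divide_simps power2_eq_square) algebra
qed

lemma rogersL_one_minus_square_has_real_derivative:
  fixes c :: real
  assumes "0 < c" "c < 1"
  shows "((\<lambda>c. rogersL (1 - c\<^sup>2)) has_real_derivative
           2 * c * ln c / (1 - c\<^sup>2) + (ln (1 - c) + ln (1 + c)) / c) (at c)"
proof (rule DERIV_cong)
  have "c\<^sup>2 < 1"
    using assms power_strict_mono[of c 1 2] by simp
  then show "((\<lambda>c. rogersL (1 - c\<^sup>2)) has_real_derivative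
      - (ln (1 - (1 - c\<^sup>2)) / (1 - c\<^sup>2) + ln (1 - c\<^sup>2) / (1 - (1 - c\<^sup>2))) / 2
      * (- (2 * c))) (at c)"
    using assms by (intro rogersL_comp_has_real_derivative) (auto intro!: derivative_eq_intros)
  have "ln (c\<^sup>2) = 2 * ln c" "ln (1 - c\<^sup>2) = ln (1 - c) + ln (1 + c)"
    using assms ln_mult[of "1 - c" "1 + c"] ln_realpow[of c 2]
    by (simp_all add: power2_eq_square algebra_simps)
  with assms \<open>c\<^sup>2 < 1\<close> show "- (ln (1 - (1 - c\<^sup>2)) / (1 - c\<^sup>2) + ln (1 - c\<^sup>2) / (1 - (1 - c\<^sup>2))) / 2
      * (- (2 * c)) = 2 * c * ln c / (1 - c\<^sup>2) + (ln (1 - c) + ln (1 + c)) / c"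
    by (simp add: field_simps power2_eq_square)
qed

definition rogersL_combination :: "real \<Rightarrow> real" where
  "rogersL_combination c = 2 * rogersL (1 - c) - 2 * rogersL (1 / (1 + c)) - rogersL (1 - c\<^sup>2)"

lemma rogersL_combination_has_real_derivative:
  fixes c :: real
  assumes "0 < c" "c < 1"
  shows "(rogersL_combination has_real_derivative 0) (at c)"
proof -
  have "(rogersL_combination has_real_derivative
        2 * ((ln (1 - c) / c + ln c / (1 - c)) / 2)
      - 2 * ((ln c / (1 + c) - ln (1 + c) / c) / 2)
      - (2 * c * ln c / (1 - c\<^sup>2) + (ln (1 - c) + ln (1 + c)) / c)) (at c)"
    unfolding rogersL_combination_def[abs_def] using assms
    by (intro DERIV_diff DERIV_cmult rogersL_one_minus_has_real_derivative
        rogersL_inverse_one_plus_has_real_derivative rogersL_one_minus_square_has_real_derivative)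
  moreover have "2 * ((ln (1 - c) / c + ln c / (1 - c)) / 2)
      - 2 * ((ln c / (1 + c) - ln (1 + c) / c) / 2)
      - (2 * c * ln c / (1 - c\<^sup>2) + (ln (1 - c) + ln (1 + c)) / c)
      = ln c * (1 / (1 - c) - 1 / (1 + c) - 2 * c / (1 - c\<^sup>2))"
    by algebra
  moreover have "1 / (1 - c) - 1 / (1 + c) - 2 * c / (1 - c\<^sup>2) = 0"
    using assms power_strict_mono[of c 1 2] by (simp add: field_simps power2_eq_square)
  ultimately show ?thesis
    by simp
qed

lemma tendsto_rogersL_combination: "(rogersL_combination \<longlongrightarrow> - (pi\<^sup>2 / 6)) (at_right 0)"
proof -
  have "filterlim (\<lambda>c::real. 1 - c) (at_left 1) (at_right 0)"
    and "filterlim (\<lambda>c::real. 1 / (1 + c)) (at_left 1) (at_right 0)"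
    and "filterlim (\<lambda>c::real. 1 - c\<^sup>2) (at_left 1) (at_right 0)"
    by real_asymp+
  then have "(rogersL_combination
      \<longlongrightarrow> 2 * (pi\<^sup>2 / 6) - 2 * (pi\<^sup>2 / 6) - pi\<^sup>2 / 6) (at_right 0)"
    unfolding rogersL_combination_def[abs_def]
    by (intro tendsto_intros filterlim_compose[OF tendsto_rogersL_1])
  then show ?thesis
    by simp
qed

lemma rogersL_combination_eq:
  fixes c :: real
  assumes "0 < c" "c < 1"
  shows "rogersL_combination c = - (pi\<^sup>2 / 6)"
proof -
  have "\<forall>\<^sub>F x in at_right 0. x \<in> {0<..<1::real}"
    by (rule eventually_at_right_real) simp
  then have "\<forall>\<^sub>F x in at_right 0. rogersL_combination x = rogersL_combination c"
    by (rule eventually_mono)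
      (use assms rogersL_combination_has_real_derivative in \<open>intro DERIV_isconst3, auto\<close>)
  then have "(rogersL_combination \<longlongrightarrow> rogersL_combination c) (at_right 0)"
    by (rule tendsto_eventually)
  then show ?thesis
    using tendsto_rogersL_combination by (rule tendsto_unique[rotated]) simp
qed

lemma root_equation_as_geometric_sums:
  fixes u :: real
  assumes "u \<noteq> 1" "n \<ge> 1"
  shows "(\<Sum>k=n..2*n+1. u ^ k) - (\<Sum>k=0..n-1. u ^ k) = (1 - u ^ n * (2 - u ^ (n + 2))) / (u - 1)"
proof -
  have "(\<Sum>k=n..2*n+1. u ^ k) = (u ^ (2 * n + 2) - u ^ n) / (u - 1)"
    using assms by (simp add: sum_gp field_simps)
  also have "u ^ (2 * n + 2) = u ^ n * u ^ (n + 2)"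
    by (simp add: mult_2 flip: power_add)
  finally have "(\<Sum>k=n..2*n+1. u ^ k) = (u ^ n * u ^ (n + 2) - u ^ n) / (u - 1)" .
  moreover have "(\<Sum>k=0..n-1. u ^ k) = (u ^ n - 1) / (u - 1)"
    using assms by (cases n) (simp_all add: sum_gp field_simps)
  ultimately show ?thesis
    using assms by (simp add: field_simps)
qed

lemma less_one_if_power_equation:
  fixes u :: real
  assumes "0 < u" "u \<noteq> 1" "u ^ n * (2 - u ^ (n + 2)) = 1"
  shows "u < 1"
proof (rule ccontr)
  assume "\<not> u < 1"
  with assms have "1 < u" by simp
  then have "1 \<le> u ^ n" and "u ^ n < u ^ (n + 2)"
    using power_strict_increasing[of n "n + 2" u] by (simp_all add: one_le_power)
  then have "u ^ n * (2 - u ^ (n + 2)) < u ^ n * (2 - u ^ n)"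
    by (intro mult_strict_left_mono) auto
  also have "\<dots> = 1 - (u ^ n - 1)\<^sup>2"
    by (simp add: algebra_simps power2_eq_square)
  finally show False
    using assms(3) by (simp add: add_nonneg_nonneg)
qed

theorem mainTheorem7:
  fixes n :: nat and u :: real
  assumes "n \<ge> 1"
    and "u > 0"
    and "(\<Sum>k=n..2*n+1. u ^ k) - (\<Sum>k=0..n-1. u ^ k) = 0"
  shows "2 * rogersL (u ^ (n + 2)) - 2 * rogersL (u ^ n) - rogersL (u ^ 2) = - (pi ^ 2 / 6)"
proof -
  have "u \<noteq> 1"
    using assms(1,3) by auto
  then have "(1 - u ^ n * (2 - u ^ (n + 2))) / (u - 1) = 0"
    using assms(3) by (simp only: root_equation_as_geometric_sums[OF \<open>u \<noteq> 1\<close> assms(1)])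
  then have root: "u ^ n * (2 - u ^ (n + 2)) = 1"
    using \<open>u \<noteq> 1\<close> by simp
  have "u < 1"
    using assms(2) \<open>u \<noteq> 1\<close> root by (rule less_one_if_power_equation)
  define c where "c = 1 - u ^ (n + 2)"
  have "0 < c" "c < 1"
    using assms(2) \<open>u < 1\<close> power_less_one_iff[of u "n + 2"] by (simp_all add: c_def del: power_Suc)
  have "1 - c = u ^ (n + 2)"
    by (simp add: c_def)
  moreover have "1 / (1 + c) = u ^ n"
    using root \<open>0 < c\<close> by (simp add: c_def field_simps)
  moreover have "1 - c\<^sup>2 = u ^ 2"
    using root by (simp add: c_def power_add algebra_simps power2_eq_square)
  ultimately show ?thesis
    using rogersL_combination_eq[OF \<open>0 < c\<close> \<open>c < 1\<close>] by (simp add: rogersL_combination_def)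
qed

end
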